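(* Let $\Bbbk$ be an algebraically closed field of characteristic zero and $A$ a finite-dimensional left $H_4$-module algebra which is semisimple as a $\Bbbk$-algebra. If $e$ is a central idempotent of $A$ such that the ideal $I=Ae$ satisfies $g\triangleright I\subseteq I$, then $g\triangleright e=e$, $x\triangleright e=0$, and $I$ is an $H_4$-submodule of $A$; in particular $I$ is itself an $H_4$-module algebra.
   Context: $H_4$ is Sweedler's $4$-dimensional Hopf algebra generated by $g,x$ with $g^2=1$, $x^2=0$, $gx=-xg$, $\Delta(g)=g\otimes g$, $\Delta(x)=x\otimes g+1\otimes x$, $\epsilon(g)=1$, $\epsilon(x)=0$. A left $H_4$-module algebra is an algebra $A$ with a left $H_4$-action $\triangleright$ satisfying $h\triangleright(ab)=(h_1\triangleright a)(h_2\triangleright b)$ and $h\triangleright 1=\epsilon(h)1$; thus $g$ acts by an algebra automorphism and $x\triangleright(ab)=(x\triangleright a)(g\triangleright b)+a(x\triangleright b)$. *)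

theory Defs
  imports "HOL-Computational_Algebra.Polynomial"
begin

definition alg_closed :: "'k::field itself \<Rightarrow> bool" where
  "alg_closed _ \<longleftrightarrow> (\<forall>p :: 'k poly. degree p \<ge> 1 \<longrightarrow> (\<exists>z. poly p z = 0))"

definition k_algebra :: "('k::field \<Rightarrow> 'a::ring_1 \<Rightarrow> 'a) \<Rightarrow> bool" where
  "k_algebra scale \<longleftrightarrow> vector_space scale \<and>
     (\<forall>c a b. scale c (a * b) = scale c a * b \<and> scale c (a * b) = a * scale c b)"

definition fin_dim_algebra :: "('k::field \<Rightarrow> 'a::ring_1 \<Rightarrow> 'a) \<Rightarrow> bool" where
  "fin_dim_algebra scale \<longleftrightarrow> k_algebra scale \<and>
     (\<exists>B. finite_dimensional_vector_space scale B)"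

text \<open>Left ideals of the ring (for a unital algebra these are automatically subspaces).\<close>
definition left_ideal :: "'a::ring_1 set \<Rightarrow> bool" where
  "left_ideal L \<longleftrightarrow> 0 \<in> L \<and> (\<forall>a\<in>L. \<forall>b\<in>L. a + b \<in> L) \<and> (\<forall>a\<in>L. - a \<in> L)
     \<and> (\<forall>r. \<forall>a\<in>L. r * a \<in> L)"

definition maximal_left_ideal :: "'a::ring_1 set \<Rightarrow> bool" where
  "maximal_left_ideal L \<longleftrightarrow> left_ideal L \<and> L \<noteq> UNIV \<and>
     (\<forall>M. left_ideal M \<and> L \<subseteq> M \<and> M \<noteq> UNIV \<longrightarrow> M = L)"

definition jacobson_radical :: "'a::ring_1 set" where
  "jacobson_radical = \<Inter>{L. maximal_left_ideal L}"

text \<open>A finite-dimensional algebra is semisimple iff its Jacobson radical vanishes.\<close>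
definition semisimple_algebra :: "('k::field \<Rightarrow> 'a::ring_1 \<Rightarrow> 'a) \<Rightarrow> bool" where
  "semisimple_algebra scale \<longleftrightarrow> k_algebra scale \<and> (jacobson_radical :: 'a set) = {0}"

text \<open>Left H_4-module algebra structure on A, given by the actions G (of g) and X (of x)
  of the generators of Sweedler's algebra H_4; the action of a general element of H_4
  is determined by linearity.  Relations g^2 = 1, x^2 = 0, gx = -xg; module-algebra
  axioms for the generators (which imply them for all of H_4, since Delta is multiplicative).\<close>
definition H4_module_algebra ::
  "('k::field \<Rightarrow> 'a::ring_1 \<Rightarrow> 'a) \<Rightarrow> ('a \<Rightarrow> 'a) \<Rightarrow> ('a \<Rightarrow> 'a) \<Rightarrow> bool" where
  "H4_module_algebra scale G X \<longleftrightarrow>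
     k_algebra scale \<and>
     Vector_Spaces.linear scale scale G \<and> Vector_Spaces.linear scale scale X \<and>
     (\<forall>a. G (G a) = a) \<and> (\<forall>a. X (X a) = 0) \<and> (\<forall>a. G (X a) = - X (G a)) \<and>
     (\<forall>a b. G (a * b) = G a * G b) \<and> G 1 = 1 \<and>
     (\<forall>a b. X (a * b) = X a * G b + a * X b) \<and> X 1 = 0"

definition H4_submodule ::
  "('k::field \<Rightarrow> 'a::ring_1 \<Rightarrow> 'a) \<Rightarrow> ('a \<Rightarrow> 'a) \<Rightarrow> ('a \<Rightarrow> 'a) \<Rightarrow> 'a set \<Rightarrow> bool" where
  "H4_submodule scale G X S \<longleftrightarrow> module.subspace scale S \<and> G ` S \<subseteq> S \<and> X ` S \<subseteq> S"

end

theory Submission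
  imports Defs
begin

text \<open>Since \<open>g\<close> acts by an involutive automorphism preserving \<open>Ae\<close>, the element \<open>g \<triangleright> e\<close>
  is an idempotent generator of \<open>Ae\<close> of the form \<open>a e\<close>, and comparing \<open>(g \<triangleright> e) e\<close> with
  \<open>g \<triangleright> ((g \<triangleright> e) e) = e (g \<triangleright> e)\<close> forces \<open>g \<triangleright> e = e\<close>. Then the twisted Leibniz rule
  gives \<open>x \<triangleright> e = (x \<triangleright> e) e + e (x \<triangleright> e)\<close>; multiplying by the central idempotent \<open>e\<close>
  yields \<open>e (x \<triangleright> e) = 2 e (x \<triangleright> e)\<close>, so \<open>x \<triangleright> e = 0\<close>.\<close>

lemma involutive_hom_fixes_central_idempotent:
  fixes G :: "'a::ring_1 \<Rightarrow> 'a" and e :: 'a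
  assumes invol: "\<And>a. G (G a) = a"
    and mult: "\<And>a b. G (a * b) = G a * G b"
    and idem: "e * e = e"
    and central: "\<And>a. a * e = e * a"
    and in_ideal: "G e = c * e"
  shows "G e = e"
proof -
  have right_unit: "G e * e = G e"
    by (simp add: in_ideal mult.assoc idem)
  have "e = G (G e * e)" by (simp add: right_unit invol)
  also have "\<dots> = e * G e" by (simp add: mult invol)
  finally have "e = e * G e" .
  with right_unit central[of "G e"] show ?thesis by simp
qed

lemma twisted_derivation_kills_central_idempotent:
  fixes G X :: "'a::ring_1 \<Rightarrow> 'a" and e :: 'a
  assumes leibniz: "\<And>a b. X (a * b) = X a * G b + a * X b"
    and fixed: "G e = e"
    and idem: "e * e = e"
    and central: "\<And>a. a * e = e * a"
  shows "X e = 0"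
proof -
  have Xe: "X e = X e * e + e * X e"
    using leibniz[of e e] by (simp add: idem fixed)
  have "e * X e = e * (X e * e) + e * (e * X e)"
    using Xe by (metis distrib_left)
  also have "\<dots> = e * X e + e * X e"
    by (simp add: central[of "X e"] mult.assoc[symmetric] idem)
  finally have "e * X e = 0" by simp
  with Xe central[of "X e"] show ?thesis by simp
qed

lemma twisted_derivation_preserves_left_ideal:
  fixes G X :: "'a::ring_1 \<Rightarrow> 'a" and e :: 'a
  assumes "\<And>a b. X (a * b) = X a * G b + a * X b"
    and "G e = e" and "X e = 0"
  shows "X ` {a * e | a. True} \<subseteq> {a * e | a. True}"
  using assms by auto

lemma k_algebra_principal_left_ideal_subspace:
  assumes "k_algebra scale"
  shows "module.subspace scale {a * e | a. True}"
proof -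
  interpret vector_space scale
    using assms unfolding k_algebra_def by blast
  have scale_left: "\<And>c a b. scale c (a * b) = scale c a * b"
    using assms unfolding k_algebra_def by blast
  show ?thesis
    unfolding subspace_def
  proof (intro conjI ballI allI)
    show "0 \<in> {a * e | a. True}" by (rule CollectI, rule exI[of _ 0]) simp
  next
    fix x y assume "x \<in> {a * e | a. True}" "y \<in> {a * e | a. True}"
    then obtain p q where "x = p * e" "y = q * e" by auto
    then have "x + y = (p + q) * e" by (simp add: distrib_right)
    then show "x + y \<in> {a * e | a. True}" by blast
  next
    fix c x assume "x \<in> {a * e | a. True}"
    then obtain p where "x = p * e" by auto
    then have "scale c x = scale c p * e" by (simp add: scale_left)
    then show "scale c x \<in> {a * e | a. True}" by blast
  qed
qed

theorem lemma3p4: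
  fixes scale :: "'k::field_char_0 \<Rightarrow> 'a::ring_1 \<Rightarrow> 'a"
    and G X :: "'a \<Rightarrow> 'a"
    and e :: 'a
  assumes "alg_closed TYPE('k)"
    and "fin_dim_algebra scale"
    and "H4_module_algebra scale G X"
    and "semisimple_algebra scale"
    and "e * e = e"
    and "\<forall>a. a * e = e * a"
    and "G ` {a * e | a. True} \<subseteq> {a * e | a. True}"
  shows "G e = e \<and> X e = 0 \<and> H4_submodule scale G X {a * e | a. True}"
proof -
  have invol: "\<And>a. G (G a) = a" and mult: "\<And>a b. G (a * b) = G a * G b"
    and leibniz: "\<And>a b. X (a * b) = X a * G b + a * X b" and alg: "k_algebra scale"
    using assms(3) unfolding H4_module_algebra_def by blast+
  have central: "\<And>a. a * e = e * a" using assms(6) by blast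
  have "G (1 * e) \<in> {a * e | a. True}" using assms(7) by blast
  then obtain c where "G e = c * e" by force
  then have Ge: "G e = e"
    using involutive_hom_fixes_central_idempotent invol mult assms(5) central by blast
  have Xe: "X e = 0"
    using twisted_derivation_kills_central_idempotent[OF leibniz Ge assms(5) central] .
  show ?thesis
    unfolding H4_submodule_def
    using Ge Xe assms(7) k_algebra_principal_left_ideal_subspace[OF alg]
      twisted_derivation_preserves_left_ideal[OF leibniz Ge Xe]
    by blast
qed

end
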